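(* Let $A=[\mathbf a_1,\dots,\mathbf a_M]\in\mathbb{R}_+^{K\times M}$ with column sums $\mathbf 1^\top\mathbf a_y>0$ for all $y$, let $\boldsymbol\beta\in\mathbb{R}_+^K$ with $b:=\mathbf 1^\top\boldsymbol\beta>0$, assume $\{\mathbf w\ge\mathbf 0:A\mathbf w=\boldsymbol\beta\}\neq\emptyset$, and let $D=\mathrm{diag}(1,\dots,M)$. Define \[\theta^*_{\max}=\max_{\mathbf w\ge\mathbf 0,\,A\mathbf w=\boldsymbol\beta}\mathbf 1^\top AD\mathbf w,\quad\tilde\theta_{\max}=\max_{\mathbf w\ge\mathbf 0,\,\mathbf 1^\top A\mathbf w=b}\mathbf 1^\top AD\mathbf w,\] \[\theta^*_{\min}=\min_{\mathbf w\ge\mathbf 0,\,A\mathbf w=\boldsymbol\beta}\mathbf 1^\top AD\mathbf w,\quad\tilde\theta_{\min}=\min_{\mathbf w\ge\mathbf 0,\,\mathbf 1^\top A\mathbf w=b}\mathbf 1^\top AD\mathbf w.\] Then \[\tilde\theta_{\max}-\theta^*_{\max}\ge\frac b2\Big\|\frac{\boldsymbol\beta}{\mathbf 1^\top\boldsymbol\beta}-\frac{\mathbf a_M}{\mathbf 1^\top\mathbf a_M}\Big\|_1,\qquad\theta^*_{\min}-\tilde\theta_{\min}\ge\frac b2\Big\|\frac{\boldsymbol\beta}{\mathbf 1^\top\boldsymbol\beta}-\frac{\mathbf a_1}{\mathbf 1^\top\mathbf a_1}\Big\|_1.\] *)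

theory Defs
  imports "HOL-Analysis.Analysis"
begin

text \<open>Matrices A in R_+^{K x M} are represented as functions nat => nat => real,
  rows indexed by {1..K}, columns by {1..M}; vectors w in R^M as functions
  nat => real supported on {1..M}.\<close>

definition col_sum :: "nat \<Rightarrow> (nat \<Rightarrow> nat \<Rightarrow> real) \<Rightarrow> nat \<Rightarrow> real" where
  "col_sum K A y = (\<Sum>k=1..K. A k y)"

definition mat_vec :: "nat \<Rightarrow> (nat \<Rightarrow> nat \<Rightarrow> real) \<Rightarrow> (nat \<Rightarrow> real) \<Rightarrow> nat \<Rightarrow> real" where
  "mat_vec M A w k = (\<Sum>y=1..M. A k y * w y)"

definition objective :: "nat \<Rightarrow> nat \<Rightarrow> (nat \<Rightarrow> nat \<Rightarrow> real) \<Rightarrow> (nat \<Rightarrow> real) \<Rightarrow> real" where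
  "objective K M A w = (\<Sum>k=1..K. \<Sum>y=1..M. A k y * real y * w y)"

definition nonneg_vec :: "nat \<Rightarrow> (nat \<Rightarrow> real) set" where
  "nonneg_vec M = {w. (\<forall>y\<in>{1..M}. w y \<ge> 0) \<and> (\<forall>y. y \<notin> {1..M} \<longrightarrow> w y = 0)}"

definition feas_exact :: "nat \<Rightarrow> nat \<Rightarrow> (nat \<Rightarrow> nat \<Rightarrow> real) \<Rightarrow> (nat \<Rightarrow> real) \<Rightarrow> (nat \<Rightarrow> real) set" where
  "feas_exact K M A \<beta> = {w \<in> nonneg_vec M. \<forall>k\<in>{1..K}. mat_vec M A w k = \<beta> k}"

definition feas_relaxed :: "nat \<Rightarrow> nat \<Rightarrow> (nat \<Rightarrow> nat \<Rightarrow> real) \<Rightarrow> real \<Rightarrow> (nat \<Rightarrow> real) set" where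
  "feas_relaxed K M A b = {w \<in> nonneg_vec M. (\<Sum>k=1..K. mat_vec M A w k) = b}"

end

theory Submission
  imports Defs
begin

text \<open>Write \<open>c\<^sub>y\<close> for the column sums and \<open>u\<^sub>y = c\<^sub>y w\<^sub>y\<close>. Every feasible point of either
  problem is a distribution of mass \<open>b\<close> over the columns, and the objective is the
  \<open>u\<close>-weighted sum of the column indices. The relaxed problem can put all mass on column
  \<open>M\<close> (resp. \<open>1\<close>), reaching \<open>M b\<close> (resp. \<open>b\<close>). For an exact solution, \<open>\<beta> - b a\<^sub>m / c\<^sub>m\<close>
  equals \<open>\<Sum>\<^sub>y w\<^sub>y (a\<^sub>y - c\<^sub>y a\<^sub>m / c\<^sub>m)\<close>; the term \<open>y = m\<close> vanishes and the others have
  \<open>\<ell>\<^sub>1\<close>-norm at most \<open>2 u\<^sub>y\<close>, so at least half the \<open>\<ell>\<^sub>1\<close>-distance from \<open>\<beta>\<close> to \<open>b a\<^sub>m / c\<^sub>m\<close>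
  is mass lying off column \<open>m\<close>, and each unit of such mass keeps the objective at least \<open>1\<close>
  away from \<open>M b\<close> (for \<open>m = M\<close>) or \<open>b\<close> (for \<open>m = 1\<close>).\<close>

lemma objective_eq_col_sum:
  "objective K M A w = (\<Sum>y=1..M. real y * (col_sum K A y * w y))"
  unfolding objective_def col_sum_def
  by (subst sum.swap) (simp add: sum_distrib_left sum_distrib_right mult_ac)

lemma sum_mat_vec_eq_col_sum:
  "(\<Sum>k=1..K. mat_vec M A w k) = (\<Sum>y=1..M. col_sum K A y * w y)"
  unfolding mat_vec_def col_sum_def
  by (subst sum.swap) (simp add: sum_distrib_right)

lemma feas_exact_subset_relaxed:
  assumes "b = (\<Sum>k=1..K. \<beta> k)"
  shows "feas_exact K M A \<beta> \<subseteq> feas_relaxed K M A b"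
  using assms unfolding feas_exact_def feas_relaxed_def by auto

lemma sum_abs_mat_vec_minus_column_le:
  assumes A_nonneg: "\<forall>k\<in>{1..K}. \<forall>y\<in>{1..M}. A k y \<ge> 0"
    and w_nonneg: "\<forall>y\<in>{1..M}. w y \<ge> 0"
    and m: "m \<in> {1..M}" and c_m: "col_sum K A m > 0"
  shows "(\<Sum>k=1..K. \<bar>mat_vec M A w k - (\<Sum>y=1..M. col_sum K A y * w y) * A k m / col_sum K A m\<bar>)
           \<le> 2 * (\<Sum>y\<in>{1..M} - {m}. col_sum K A y * w y)"
proof -
  define c where "c = col_sum K A"
  define d where "d k y = A k y - c y * A k m / c m" for k y
  have d_m: "d k m = 0" for k
    using c_m by (simp add: d_def c_def)
  have residual: "mat_vec M A w k - (\<Sum>y=1..M. c y * w y) * A k m / c m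
                    = (\<Sum>y\<in>{1..M} - {m}. w y * d k y)" for k
  proof -
    have "(\<Sum>y=1..M. c y * w y) * A k m / c m = (\<Sum>y=1..M. w y * (c y * A k m / c m))"
      by (simp only: sum_distrib_right sum_divide_distrib) (simp add: mult_ac)
    then have "mat_vec M A w k - (\<Sum>y=1..M. c y * w y) * A k m / c m = (\<Sum>y=1..M. w y * d k y)"
      by (simp add: mat_vec_def d_def sum_subtractf right_diff_distrib mult_ac)
    also have "\<dots> = (\<Sum>y\<in>{1..M} - {m}. w y * d k y)"
      using m d_m by (simp add: sum.remove)
    finally show ?thesis .
  qed
  have column_l1: "(\<Sum>k=1..K. \<bar>d k y\<bar>) \<le> 2 * c y" if y: "y \<in> {1..M}" for y
  proof -
    have c_y: "c y \<ge> 0"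
      using A_nonneg y by (auto simp: c_def col_sum_def intro: sum_nonneg)
    have "(\<Sum>k=1..K. \<bar>d k y\<bar>) \<le> (\<Sum>k=1..K. A k y + c y * A k m / c m)"
      using A_nonneg y m c_y c_m
      by (intro sum_mono) (auto simp: d_def c_def abs_le_iff)
    also have "\<dots> = 2 * c y"
      using c_m by (simp add: c_def col_sum_def sum.distrib sum_divide_distrib[symmetric]
          sum_distrib_left[symmetric])
    finally show ?thesis .
  qed
  have "(\<Sum>k=1..K. \<bar>mat_vec M A w k - (\<Sum>y=1..M. c y * w y) * A k m / c m\<bar>)
          \<le> (\<Sum>k=1..K. \<Sum>y\<in>{1..M} - {m}. w y * \<bar>d k y\<bar>)"
    unfolding residual using w_nonneg
    by (intro sum_mono order.trans[OF sum_abs]) (simp add: abs_mult)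
  also have "\<dots> = (\<Sum>y\<in>{1..M} - {m}. w y * (\<Sum>k=1..K. \<bar>d k y\<bar>))"
    by (subst sum.swap) (simp add: sum_distrib_left)
  also have "\<dots> \<le> (\<Sum>y\<in>{1..M} - {m}. w y * (2 * c y))"
    using w_nonneg column_l1 by (intro sum_mono mult_left_mono) auto
  finally show ?thesis
    by (simp add: c_def sum_distrib_left mult_ac)
qed

lemma index_weighted_sum_le:
  fixes u :: "nat \<Rightarrow> real"
  assumes "\<forall>y\<in>{1..M}. u y \<ge> 0"
  shows "(\<Sum>y=1..M. real y * u y) \<le> real M * (\<Sum>y=1..M. u y) - (\<Sum>y\<in>{1..M} - {M}. u y)"
proof -
  have "(\<Sum>y\<in>{1..M} - {M}. u y) \<le> (\<Sum>y\<in>{1..M} - {M}. (real M - real y) * u y)"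
  proof (intro sum_mono)
    fix y assume y: "y \<in> {1..M} - {M}"
    then have "1 \<le> real M - real y" by auto
    then show "u y \<le> (real M - real y) * u y"
      using mult_right_mono[of 1 "real M - real y" "u y"] assms y by simp
  qed
  also have "\<dots> = (\<Sum>y=1..M. (real M - real y) * u y)"
    by (intro sum.mono_neutral_left) auto
  finally show ?thesis
    by (simp add: left_diff_distrib sum_subtractf sum_distrib_left)
qed

lemma index_weighted_sum_ge:
  fixes u :: "nat \<Rightarrow> real"
  assumes "\<forall>y\<in>{1..M}. u y \<ge> 0"
  shows "(\<Sum>y=1..M. real y * u y) \<ge> (\<Sum>y=1..M. u y) + (\<Sum>y\<in>{1..M} - {1}. u y)"
proof -
  have "(\<Sum>y\<in>{1..M} - {1}. u y) \<le> (\<Sum>y\<in>{1..M} - {1}. (real y - 1) * u y)"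
  proof (intro sum_mono)
    fix y assume y: "y \<in> {1..M} - {1}"
    then have "1 \<le> real y - 1" by auto
    then show "u y \<le> (real y - 1) * u y"
      using mult_right_mono[of 1 "real y - 1" "u y"] assms y by simp
  qed
  also have "\<dots> = (\<Sum>y=1..M. (real y - 1) * u y)"
    by (intro sum.mono_neutral_left) auto
  finally show ?thesis
    by (simp add: left_diff_distrib sum_subtractf)
qed

lemma mult_sum_abs_diff_div:
  fixes b :: real
  assumes "b > 0"
  shows "b * (\<Sum>k\<in>S. \<bar>f k / b - g k\<bar>) = (\<Sum>k\<in>S. \<bar>f k - b * g k\<bar>)"
proof -
  have "b * \<bar>f k / b - g k\<bar> = \<bar>b * (f k / b - g k)\<bar>" for k
    using assms by (simp add: abs_mult)
  also have "\<dots> k = \<bar>f k - b * g k\<bar>" for k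
    using assms by (simp add: right_diff_distrib)
  finally show ?thesis
    by (simp add: sum_distrib_left)
qed

lemma feas_relaxed_nonneg:
  "w \<in> feas_relaxed K M A b \<Longrightarrow> \<forall>y\<in>{1..M}. w y \<ge> 0"
  unfolding feas_relaxed_def nonneg_vec_def by auto

lemma feas_relaxed_mass:
  "w \<in> feas_relaxed K M A b \<Longrightarrow> (\<Sum>y=1..M. col_sum K A y * w y) = b"
  unfolding feas_relaxed_def sum_mat_vec_eq_col_sum by auto

lemma objective_le_of_feas_relaxed:
  assumes "\<forall>y\<in>{1..M}. col_sum K A y \<ge> 0" and w: "w \<in> feas_relaxed K M A b"
  shows "objective K M A w \<le> real M * b"
proof -
  have mass_nonneg: "\<forall>y\<in>{1..M}. col_sum K A y * w y \<ge> 0"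
    using assms feas_relaxed_nonneg[OF w] by simp
  then have "(\<Sum>y\<in>{1..M} - {M}. col_sum K A y * w y) \<ge> 0"
    by (intro sum_nonneg) auto
  with index_weighted_sum_le[OF mass_nonneg] show ?thesis
    unfolding objective_eq_col_sum feas_relaxed_mass[OF w] by linarith
qed

lemma objective_ge_of_feas_relaxed:
  assumes "\<forall>y\<in>{1..M}. col_sum K A y \<ge> 0" and w: "w \<in> feas_relaxed K M A b"
  shows "objective K M A w \<ge> b"
proof -
  have mass_nonneg: "\<forall>y\<in>{1..M}. col_sum K A y * w y \<ge> 0"
    using assms feas_relaxed_nonneg[OF w] by simp
  then have "(\<Sum>y\<in>{1..M} - {1}. col_sum K A y * w y) \<ge> 0"
    by (intro sum_nonneg) auto
  with index_weighted_sum_ge[OF mass_nonneg] show ?thesis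
    unfolding objective_eq_col_sum feas_relaxed_mass[OF w] by linarith
qed

lemma feas_relaxed_point_mass:
  assumes m: "m \<in> {1..M}" and c_m: "col_sum K A m > 0" and "b \<ge> 0"
  shows "\<exists>w\<in>feas_relaxed K M A b. objective K M A w = real m * b"
proof
  let ?w = "\<lambda>y. if y = m then b / col_sum K A m else 0"
  show "?w \<in> feas_relaxed K M A b"
    using assms unfolding feas_relaxed_def nonneg_vec_def sum_mat_vec_eq_col_sum
    by (auto simp: if_distrib cong: if_cong)
  show "objective K M A ?w = real m * b"
    using m c_m unfolding objective_eq_col_sum by (simp add: if_distrib cong: if_cong)
qed

lemma feas_exact_l1_distance_le:
  assumes A_nonneg: "\<forall>k\<in>{1..K}. \<forall>y\<in>{1..M}. A k y \<ge> 0"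
    and col_pos: "\<forall>y\<in>{1..M}. col_sum K A y > 0"
    and b_def: "b = (\<Sum>k=1..K. \<beta> k)" and b_pos: "b > 0"
    and m: "m \<in> {1..M}" and w: "w \<in> feas_exact K M A \<beta>"
  shows "b * (\<Sum>k=1..K. \<bar>\<beta> k / b - A k m / col_sum K A m\<bar>)
           \<le> 2 * (\<Sum>y\<in>{1..M} - {m}. col_sum K A y * w y)"
proof -
  have w_rel: "w \<in> feas_relaxed K M A b"
    using feas_exact_subset_relaxed[OF b_def] w by blast
  have "\<forall>k\<in>{1..K}. \<beta> k = mat_vec M A w k"
    using w unfolding feas_exact_def by auto
  then have "b * (\<Sum>k=1..K. \<bar>\<beta> k / b - A k m / col_sum K A m\<bar>)
               = (\<Sum>k=1..K. \<bar>mat_vec M A w k - b * A k m / col_sum K A m\<bar>)"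
    using b_pos by (simp add: mult_sum_abs_diff_div)
  also have "\<dots> \<le> 2 * (\<Sum>y\<in>{1..M} - {m}. col_sum K A y * w y)"
    using sum_abs_mat_vec_minus_column_le[OF A_nonneg feas_relaxed_nonneg[OF w_rel] m] m col_pos
    unfolding feas_relaxed_mass[OF w_rel] by auto
  finally show ?thesis .
qed

lemma objective_le_of_feas_exact:
  assumes A_nonneg: "\<forall>k\<in>{1..K}. \<forall>y\<in>{1..M}. A k y \<ge> 0"
    and col_pos: "\<forall>y\<in>{1..M}. col_sum K A y > 0"
    and b_def: "b = (\<Sum>k=1..K. \<beta> k)" and b_pos: "b > 0"
    and "M \<ge> 1" and w: "w \<in> feas_exact K M A \<beta>"
  shows "objective K M A w \<le> real M * b - b / 2 * (\<Sum>k=1..K. \<bar>\<beta> k / b - A k M / col_sum K A M\<bar>)"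
proof -
  have w_rel: "w \<in> feas_relaxed K M A b"
    using feas_exact_subset_relaxed[OF b_def] w by blast
  have "\<forall>y\<in>{1..M}. col_sum K A y * w y \<ge> 0"
    using col_pos feas_relaxed_nonneg[OF w_rel] by (simp add: less_imp_le)
  from index_weighted_sum_le[OF this]
    and feas_exact_l1_distance_le[OF A_nonneg col_pos b_def b_pos _ w, of M] \<open>M \<ge> 1\<close>
  show ?thesis
    unfolding objective_eq_col_sum feas_relaxed_mass[OF w_rel] by auto
qed

lemma objective_ge_of_feas_exact:
  assumes A_nonneg: "\<forall>k\<in>{1..K}. \<forall>y\<in>{1..M}. A k y \<ge> 0"
    and col_pos: "\<forall>y\<in>{1..M}. col_sum K A y > 0"
    and b_def: "b = (\<Sum>k=1..K. \<beta> k)" and b_pos: "b > 0"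
    and "M \<ge> 1" and w: "w \<in> feas_exact K M A \<beta>"
  shows "objective K M A w \<ge> b + b / 2 * (\<Sum>k=1..K. \<bar>\<beta> k / b - A k 1 / col_sum K A 1\<bar>)"
proof -
  have w_rel: "w \<in> feas_relaxed K M A b"
    using feas_exact_subset_relaxed[OF b_def] w by blast
  have "\<forall>y\<in>{1..M}. col_sum K A y * w y \<ge> 0"
    using col_pos feas_relaxed_nonneg[OF w_rel] by (simp add: less_imp_le)
  from index_weighted_sum_ge[OF this]
    and feas_exact_l1_distance_le[OF A_nonneg col_pos b_def b_pos _ w, of 1] \<open>M \<ge> 1\<close>
  show ?thesis
    unfolding objective_eq_col_sum feas_relaxed_mass[OF w_rel] by auto
qed

theorem lemma2:
  fixes K M :: nat and A :: "nat \<Rightarrow> nat \<Rightarrow> real" and \<beta> :: "nat \<Rightarrow> real" and b :: real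
  assumes A_nonneg: "\<forall>k\<in>{1..K}. \<forall>y\<in>{1..M}. A k y \<ge> 0"
    and col_pos: "\<forall>y\<in>{1..M}. col_sum K A y > 0"
    and beta_nonneg: "\<forall>k\<in>{1..K}. \<beta> k \<ge> 0"
    and b_def: "b = (\<Sum>k=1..K. \<beta> k)"
    and b_pos: "b > 0"
    and feasible: "feas_exact K M A \<beta> \<noteq> {}"
  shows "Sup (objective K M A ` feas_relaxed K M A b) - Sup (objective K M A ` feas_exact K M A \<beta>)
           \<ge> b / 2 * (\<Sum>k=1..K. \<bar>\<beta> k / b - A k M / col_sum K A M\<bar>)
       \<and> Inf (objective K M A ` feas_exact K M A \<beta>) - Inf (objective K M A ` feas_relaxed K M A b)
           \<ge> b / 2 * (\<Sum>k=1..K. \<bar>\<beta> k / b - A k 1 / col_sum K A 1\<bar>)"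
proof -
  let ?R = "objective K M A ` feas_relaxed K M A b" and ?E = "objective K M A ` feas_exact K M A \<beta>"
  obtain w where "w \<in> feas_exact K M A \<beta>"
    using feasible by blast
  then have "(\<Sum>y=1..M. col_sum K A y * w y) = b"
    using feas_relaxed_mass feas_exact_subset_relaxed[OF b_def] by blast
  then have "M \<ge> 1"
    using b_pos by (cases "M = 0") auto
  have col_nonneg: "\<forall>y\<in>{1..M}. col_sum K A y \<ge> 0"
    using col_pos by (simp add: less_imp_le)
  obtain w\<^sub>M where "w\<^sub>M \<in> feas_relaxed K M A b" "objective K M A w\<^sub>M = real M * b"
    using feas_relaxed_point_mass[of M M K A b] \<open>M \<ge> 1\<close> col_pos b_pos by auto
  moreover have "bdd_above ?R"
    using objective_le_of_feas_relaxed[OF col_nonneg] by (intro bdd_aboveI2) auto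
  ultimately have sup_R: "real M * b \<le> Sup ?R"
    by (metis cSup_upper image_eqI)
  obtain w\<^sub>1 where "w\<^sub>1 \<in> feas_relaxed K M A b" "objective K M A w\<^sub>1 = b"
    using feas_relaxed_point_mass[of 1 M K A b] \<open>M \<ge> 1\<close> col_pos b_pos by auto
  moreover have "bdd_below ?R"
    using objective_ge_of_feas_relaxed[OF col_nonneg] by (intro bdd_belowI2) auto
  ultimately have inf_R: "Inf ?R \<le> b"
    by (metis cInf_lower image_eqI)
  have "Sup ?E \<le> real M * b - b / 2 * (\<Sum>k=1..K. \<bar>\<beta> k / b - A k M / col_sum K A M\<bar>)"
    using feasible objective_le_of_feas_exact[OF A_nonneg col_pos b_def b_pos \<open>M \<ge> 1\<close>]
    by (intro cSup_least) auto
  moreover have "b + b / 2 * (\<Sum>k=1..K. \<bar>\<beta> k / b - A k 1 / col_sum K A 1\<bar>) \<le> Inf ?E"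
    using feasible objective_ge_of_feas_exact[OF A_nonneg col_pos b_def b_pos \<open>M \<ge> 1\<close>]
    by (intro cInf_greatest) auto
  ultimately show ?thesis
    using sup_R inf_R by linarith
qed

end
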